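(* Let $X$ be a shift space and let $w\in\mathcal L(X)$. Let $U\subseteq\mathcal L(X)$ be a finite $X$-maximal suffix code and $V\subseteq\mathcal L(X)$ a finite $X$-maximal prefix code. Let $\ell\in\mathcal L(X)$ with $\ell w\in\mathcal L(X)$ be such that $A\ell\cap\mathcal L(X)\subseteq U$ and such that $\mathcal E_{A,V}(\ell w)$ is a tree. Set $U'=(U\setminus A\ell)\cup\{\ell\}$. Then $\mathcal E_{U',V}(w)$ is a tree if and only if $\mathcal E_{U,V}(w)$ is a tree.
   Context: $A$ is a finite alphabet; a shift space is a closed shift-invariant subset $X\subseteq A^{\mathbb Z}$; $\mathcal L(X)$ is its set of finite factors. A prefix code (resp. suffix code) is a set of words none of which is a proper prefix (resp. proper suffix) of another; a prefix (resp. suffix) code $U\subseteq\mathcal L(X)$ is $X$-maximal if it is not properly contained in a prefix (resp. suffix) code contained in $\mathcal L(X)$. For $U,V\subseteq A^*$ and $w\in\mathcal L(X)$, let $L_U(w)=\{u\in U: uw\in\mathcal L(X)\}$ and $R_V(w)=\{v\in V: wv\in\mathcal L(X)\}$; the generalized extension graph $\mathcal E_{U,V}(w)$ is the undirected bipartite graph whose vertex set is the disjoint union of $L_U(w)$ and $R_V(w)$, with an edge between $u\in L_U(w)$ and $v\in R_V(w)$ iff $uwv\in\mathcal L(X)$. (Here $A$ denotes the set of one-letter words.) *)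

theory Defs
  imports Main "HOL-Library.Sublist"
begin

text \<open>The alphabet A is the finite type 'a (A = UNIV). Bi-infinite sequences are int => 'a.\<close>

definition shift :: "(int \<Rightarrow> 'a) \<Rightarrow> (int \<Rightarrow> 'a)" where
  "shift x = (\<lambda>i. x (i + 1))"

text \<open>Closedness in the product topology of the discrete alphabet: a point belongs to X
  iff every central window of it agrees with some point of X.\<close>
definition closed_seqs :: "(int \<Rightarrow> 'a) set \<Rightarrow> bool" where
  "closed_seqs X \<longleftrightarrow>
     (\<forall>x. (\<forall>n::nat. \<exists>y\<in>X. \<forall>i::int. \<bar>i\<bar> \<le> int n \<longrightarrow> y i = x i) \<longrightarrow> x \<in> X)"

definition shift_space :: "(int \<Rightarrow> 'a::finite) set \<Rightarrow> bool" where
  "shift_space X \<longleftrightarrow> closed_seqs X \<and> shift ` X = X"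

definition lang :: "(int \<Rightarrow> 'a) set \<Rightarrow> 'a list set" where
  "lang X = {w. \<exists>x\<in>X. \<exists>i::int. \<forall>j<length w. w ! j = x (i + int j)}"

definition prefix_code :: "'a list set \<Rightarrow> bool" where
  "prefix_code U \<longleftrightarrow> (\<forall>u\<in>U. \<forall>v\<in>U. prefix u v \<longrightarrow> u = v)"

definition suffix_code :: "'a list set \<Rightarrow> bool" where
  "suffix_code U \<longleftrightarrow> (\<forall>u\<in>U. \<forall>v\<in>U. suffix u v \<longrightarrow> u = v)"

definition X_max_prefix_code :: "(int \<Rightarrow> 'a) set \<Rightarrow> 'a list set \<Rightarrow> bool" where
  "X_max_prefix_code X U \<longleftrightarrow> U \<subseteq> lang X \<and> prefix_code U \<and>
     (\<forall>U'. U \<subseteq> U' \<and> U' \<subseteq> lang X \<and> prefix_code U' \<longrightarrow> U' = U)"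

definition X_max_suffix_code :: "(int \<Rightarrow> 'a) set \<Rightarrow> 'a list set \<Rightarrow> bool" where
  "X_max_suffix_code X U \<longleftrightarrow> U \<subseteq> lang X \<and> suffix_code U \<and>
     (\<forall>U'. U \<subseteq> U' \<and> U' \<subseteq> lang X \<and> suffix_code U' \<longrightarrow> U' = U)"

definition letters :: "'a list set" where
  "letters = {[a] | a. True}"

definition L_set :: "(int \<Rightarrow> 'a) set \<Rightarrow> 'a list set \<Rightarrow> 'a list \<Rightarrow> 'a list set" where
  "L_set X U w = {u \<in> U. u @ w \<in> lang X}"

definition R_set :: "(int \<Rightarrow> 'a) set \<Rightarrow> 'a list set \<Rightarrow> 'a list \<Rightarrow> 'a list set" where
  "R_set X V w = {v \<in> V. w @ v \<in> lang X}"

text \<open>Generalized extension graph: vertices are the disjoint union (Inl for left, Inr for right).\<close>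
definition ext_vertices :: "(int \<Rightarrow> 'a) set \<Rightarrow> 'a list set \<Rightarrow> 'a list set \<Rightarrow> 'a list
    \<Rightarrow> ('a list + 'a list) set" where
  "ext_vertices X U V w = Inl ` L_set X U w \<union> Inr ` R_set X V w"

fun ext_edge :: "(int \<Rightarrow> 'a) set \<Rightarrow> 'a list set \<Rightarrow> 'a list set \<Rightarrow> 'a list
    \<Rightarrow> ('a list + 'a list) \<Rightarrow> ('a list + 'a list) \<Rightarrow> bool" where
  "ext_edge X U V w (Inl u) (Inr v) =
     (u \<in> L_set X U w \<and> v \<in> R_set X V w \<and> u @ w @ v \<in> lang X)"
| "ext_edge X U V w (Inr v) (Inl u) =
     (u \<in> L_set X U w \<and> v \<in> R_set X V w \<and> u @ w @ v \<in> lang X)"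
| "ext_edge X U V w _ _ = False"

definition graph_connected :: "'v set \<Rightarrow> ('v \<Rightarrow> 'v \<Rightarrow> bool) \<Rightarrow> bool" where
  "graph_connected Vs E \<longleftrightarrow>
     (\<forall>x\<in>Vs. \<forall>y\<in>Vs. (\<lambda>a b. a \<in> Vs \<and> b \<in> Vs \<and> E a b)\<^sup>*\<^sup>* x y)"

definition graph_has_cycle :: "'v set \<Rightarrow> ('v \<Rightarrow> 'v \<Rightarrow> bool) \<Rightarrow> bool" where
  "graph_has_cycle Vs E \<longleftrightarrow>
     (\<exists>cs. length cs \<ge> 3 \<and> distinct cs \<and> set cs \<subseteq> Vs \<and>
        (\<forall>i < length cs. E (cs ! i) (cs ! ((i + 1) mod length cs))))"

definition is_tree :: "'v set \<Rightarrow> ('v \<Rightarrow> 'v \<Rightarrow> bool) \<Rightarrow> bool" where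
  "is_tree Vs E \<longleftrightarrow> Vs \<noteq> {} \<and> graph_connected Vs E \<and> \<not> graph_has_cycle Vs E"

definition ext_graph_is_tree :: "(int \<Rightarrow> 'a) set \<Rightarrow> 'a list set \<Rightarrow> 'a list set \<Rightarrow> 'a list \<Rightarrow> bool" where
  "ext_graph_is_tree X U V w = is_tree (ext_vertices X U V w) (ext_edge X U V w)"

end

theory Submission
  imports Defs
begin

text \<open>In \<open>\<E>\<^sub>U\<^sub>,\<^sub>V(w)\<close> the left vertices \<open>a l\<close> (\<open>a\<close> a letter) are joined exactly to the
  right vertices \<open>v\<close> with \<open>a l w v \<in> \<L>(X)\<close>; appending \<open>l\<close> identifies the subgraph they span
  with their neighbours with \<open>\<E>\<^sub>A\<^sub>,\<^sub>V(l w)\<close>, a tree. Passing to \<open>U'\<close> replaces these vertices by the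
  single vertex \<open>l\<close>, joined to the same neighbours (\<open>l \<notin> U\<close> because \<open>U\<close> is a suffix code). So a tree spanning a set \<open>N\<close> of vertices is
  exchanged for a star on \<open>N\<close>, which changes neither connectedness nor the existence of cycles:
  walks are transported by collapsing the tree to its centre or by expanding the centre along
  the tree, and a cycle through the tree leaves it at one vertex of \<open>N\<close> and re-enters it at
  another.\<close>

section \<open>Undirected graphs\<close>

definition del_edge :: "('v \<Rightarrow> 'v \<Rightarrow> bool) \<Rightarrow> 'v \<Rightarrow> 'v \<Rightarrow> 'v \<Rightarrow> 'v \<Rightarrow> bool" where
  "del_edge E x y a b \<longleftrightarrow> E a b \<and> \<not> (a = x \<and> b = y) \<and> \<not> (a = y \<and> b = x)"

lemma del_edge_commute: "del_edge E x y = del_edge E y x"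
  by (auto simp: del_edge_def fun_eq_iff)

lemma rtranclp_map:
  assumes "\<And>a b. R a b \<Longrightarrow> R' (f a) (f b)" and "R\<^sup>*\<^sup>* a b"
  shows "R'\<^sup>*\<^sup>* (f a) (f b)"
  using assms(2) by (induction rule: rtranclp_induct) (auto intro: rtranclp.rtrancl_into_rtrancl assms(1))

lemma rtranclp_imp_distinct_path:
  assumes "R\<^sup>*\<^sup>* a b"
  shows "\<exists>zs. zs \<noteq> [] \<and> hd zs = a \<and> last zs = b \<and> distinct zs \<and> successively R zs"
  using assms
proof (induction rule: rtranclp_induct)
  case base
  show ?case by (intro exI[of _ "[a]"]) auto
next
  case (step b c)
  then obtain zs where zs: "zs \<noteq> []" "hd zs = a" "last zs = b" "distinct zs" "successively R zs"
    by blast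
  show ?case
  proof (cases "c \<in> set zs")
    case True
    then obtain ys ts where eq: "zs = ys @ c # ts" by (meson split_list)
    have "successively R (ys @ [c])"
      using zs(5) unfolding eq successively_append_iff by (auto simp: successively_Cons)
    moreover have "hd (ys @ [c]) = a" using zs(2) eq by (cases ys) auto
    ultimately show ?thesis using zs(4) eq by (intro exI[of _ "ys @ [c]"]) auto
  next
    case False
    have "successively R (zs @ [c])"
      using zs step(2) unfolding successively_append_iff by auto
    then show ?thesis using zs False by (intro exI[of _ "zs @ [c]"]) auto
  qed
qed

lemma rtranclp_first_edge:
  assumes "R\<^sup>*\<^sup>* x y" and "x \<noteq> y"
  shows "\<exists>z. R x z \<and> (del_edge R x z)\<^sup>*\<^sup>* z y"
  using assms
proof (induction rule: rtranclp_induct)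
  case (step b c)
  show ?case
  proof (cases "b = x")
    case True
    then show ?thesis using step(2) by blast
  next
    case False
    then obtain z where z: "R x z" "(del_edge R x z)\<^sup>*\<^sup>* z b" using step(3) by blast
    have "del_edge R x z b c" using step(2,4) False by (auto simp: del_edge_def)
    then show ?thesis using z by (blast intro: rtranclp.rtrancl_into_rtrancl)
  qed
qed simp

lemma rtranclp_avoid_or_hit:
  assumes "R\<^sup>*\<^sup>* a b" and "a \<noteq> p"
  shows "((\<lambda>u v. R u v \<and> u \<noteq> p \<and> v \<noteq> p)\<^sup>*\<^sup>* a b \<and> b \<noteq> p) \<or>
         (\<exists>m. (\<lambda>u v. R u v \<and> u \<noteq> p \<and> v \<noteq> p)\<^sup>*\<^sup>* a m \<and> R m p)"
  using assms(1)
proof (induction rule: rtranclp_induct)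
  case base
  then show ?case using assms(2) by simp
next
  case (step b c)
  then show ?case by (cases "c = p") (auto intro: rtranclp.rtrancl_into_rtrancl)
qed

locale ugraph =
  fixes Vs :: "'v set" and E :: "'v \<Rightarrow> 'v \<Rightarrow> bool"
  assumes sym: "E a b \<Longrightarrow> E b a"
    and irrefl: "\<not> E a a"
    and edge_in: "E a b \<Longrightarrow> a \<in> Vs \<and> b \<in> Vs"
begin

lemma graph_connected_iff: "graph_connected Vs E \<longleftrightarrow> (\<forall>x\<in>Vs. \<forall>y\<in>Vs. E\<^sup>*\<^sup>* x y)"
proof -
  have "(\<lambda>a b. a \<in> Vs \<and> b \<in> Vs \<and> E a b) = E" using edge_in by (auto simp: fun_eq_iff)
  then show ?thesis unfolding graph_connected_def by simp
qed

lemma del_edge_rtranclp_sym: "(del_edge E x y)\<^sup>*\<^sup>* a b \<Longrightarrow> (del_edge E x y)\<^sup>*\<^sup>* b a"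
  by (rule sympD[OF symp_rtranclp]) (auto intro: sympI simp: del_edge_def sym)

lemma cycle_edge_sym:
  assumes "E x y" and "(del_edge E x y)\<^sup>*\<^sup>* y x"
  shows "E y x \<and> (del_edge E y x)\<^sup>*\<^sup>* x y"
  using sym[OF assms(1)] del_edge_rtranclp_sym[OF assms(2)] by (simp add: del_edge_commute)

lemma graph_has_cycle_iff: "graph_has_cycle Vs E \<longleftrightarrow> (\<exists>x y. E x y \<and> (del_edge E x y)\<^sup>*\<^sup>* y x)"
proof
  assume "graph_has_cycle Vs E"
  then obtain cs where cs: "length cs \<ge> 3" "distinct cs"
    "\<forall>i < length cs. E (cs ! i) (cs ! ((i + 1) mod length cs))"
    unfolding graph_has_cycle_def by blast
  define k where "k = length cs"
  have k3: "k \<ge> 3" using cs k_def by simp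
  have step: "E (cs ! i) (cs ! Suc i)" if "Suc i < k" for i
    using cs(3)[rule_format, of i] that k_def by simp
  have "Suc (k - 1) = k" using k3 by simp
  then have last: "E (cs ! (k - 1)) (cs ! 0)"
    using cs(3)[rule_format, of "k - 1"] k3 k_def by simp
  have nth_eq: "cs ! i = cs ! j \<longleftrightarrow> i = j" if "i < k" "j < k" for i j
    using nth_eq_iff_index_eq[OF cs(2)] that k_def by simp
  let ?D = "del_edge E (cs ! 0) (cs ! 1)"
  have path: "?D\<^sup>*\<^sup>* (cs ! 1) (cs ! j)" if "1 \<le> j" "j < k" for j
    using that
  proof (induction j)
    case (Suc j)
    show ?case
    proof (cases "j = 0")
      case False
      have "?D (cs ! j) (cs ! Suc j)"
        using step[of j] Suc.prems nth_eq[of j 0] nth_eq[of "Suc j" 0] False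
        by (auto simp: del_edge_def)
      then show ?thesis using Suc False by (auto intro: rtranclp.rtrancl_into_rtrancl)
    qed simp
  qed simp
  have "?D (cs ! (k - 1)) (cs ! 0)"
    using last nth_eq[of "k - 1" 0] nth_eq[of "k - 1" 1] k3 by (auto simp: del_edge_def)
  moreover have "?D\<^sup>*\<^sup>* (cs ! 1) (cs ! (k - 1))" using path[of "k - 1"] k3 by simp
  ultimately have "?D\<^sup>*\<^sup>* (cs ! 1) (cs ! 0)" by (rule rtranclp.rtrancl_into_rtrancl[rotated])
  moreover have "E (cs ! 0) (cs ! 1)" using step[of 0] k3 by simp
  ultimately show "\<exists>x y. E x y \<and> (del_edge E x y)\<^sup>*\<^sup>* y x" by blast
next
  assume "\<exists>x y. E x y \<and> (del_edge E x y)\<^sup>*\<^sup>* y x"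
  then obtain x y where xy: "E x y" "(del_edge E x y)\<^sup>*\<^sup>* y x" by blast
  obtain zs where zs: "zs \<noteq> []" "hd zs = y" "last zs = x" "distinct zs"
      "successively (del_edge E x y) zs"
    using rtranclp_imp_distinct_path[OF xy(2)] by blast
  define k where "k = length zs"
  have "x \<noteq> y" using xy(1) irrefl by auto
  then have "k \<noteq> 1" using zs(2,3) k_def by (cases zs) auto
  moreover have "k \<noteq> 2"
  proof
    assume "k = 2"
    then obtain a b where "zs = [a, b]" using k_def by (cases zs; cases "tl zs") auto
    then show False using zs by (auto simp: del_edge_def)
  qed
  moreover have "k \<noteq> 0" using zs(1) k_def by simp
  ultimately have k3: "k \<ge> 3" by arith
  have first: "zs ! 0 = y" using zs(1,2) by (simp add: hd_conv_nth)
  have last: "zs ! (k - 1) = x" using zs(1,3) k_def by (simp add: last_conv_nth)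
  have cyc: "\<forall>i < k. E (zs ! i) (zs ! ((i + 1) mod k))"
  proof (intro allI impI)
    fix i assume i: "i < k"
    show "E (zs ! i) (zs ! ((i + 1) mod k))"
    proof (cases "Suc i < k")
      case True
      then show ?thesis
        using successively_nth[OF zs(5), of i] k_def by (simp add: del_edge_def)
    next
      case False
      then have "i = k - 1" using i by simp
      then show ?thesis using first last xy(1) k3 by simp
    qed
  qed
  moreover have "set zs \<subseteq> Vs"
  proof
    fix z assume "z \<in> set zs"
    then obtain i where i: "i < k" "zs ! i = z" using k_def by (auto simp: in_set_conv_nth)
    then show "z \<in> Vs" using edge_in[OF cyc[rule_format, OF i(1)]] by simp
  qed
  ultimately show "graph_has_cycle Vs E"
    unfolding graph_has_cycle_def using k3 zs(4) k_def by blast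
qed

end

lemma is_tree_bij_betw:
  assumes tree: "is_tree Vs1 E1" and bij: "bij_betw f Vs1 Vs2"
    and edges: "\<And>a b. a \<in> Vs1 \<Longrightarrow> b \<in> Vs1 \<Longrightarrow> E2 (f a) (f b) \<longleftrightarrow> E1 a b"
  shows "is_tree Vs2 E2"
  unfolding is_tree_def
proof (intro conjI)
  show "Vs2 \<noteq> {}" using tree bij unfolding is_tree_def bij_betw_def by auto
  let ?R1 = "\<lambda>a b. a \<in> Vs1 \<and> b \<in> Vs1 \<and> E1 a b" and ?R2 = "\<lambda>a b. a \<in> Vs2 \<and> b \<in> Vs2 \<and> E2 a b"
  have "?R2 (f a) (f b)" if "?R1 a b" for a b
    using that edges bij by (auto simp: bij_betw_def)
  then have "?R2\<^sup>*\<^sup>* (f a) (f b)" if "?R1\<^sup>*\<^sup>* a b" for a b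
    using that by (rule rtranclp_map)
  then show "graph_connected Vs2 E2"
    using tree bij unfolding is_tree_def graph_connected_def bij_betw_def by blast
  show "\<not> graph_has_cycle Vs2 E2"
  proof
    assume "graph_has_cycle Vs2 E2"
    then obtain cs where cs: "length cs \<ge> 3" "distinct cs" "set cs \<subseteq> Vs2"
      "\<forall>i < length cs. E2 (cs ! i) (cs ! ((i + 1) mod length cs))"
      unfolding graph_has_cycle_def by blast
    define g where "g = inv_into Vs1 f"
    have fg: "y \<in> Vs2 \<Longrightarrow> f (g y) = y" and gin: "y \<in> Vs2 \<Longrightarrow> g y \<in> Vs1" for y
      using bij unfolding g_def bij_betw_def by (auto simp: f_inv_into_f inv_into_into)
    have "inj_on g Vs2" using fg by (metis inj_onI)
    have "graph_has_cycle Vs1 E1"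
      unfolding graph_has_cycle_def
    proof (intro exI[of _ "map g cs"] conjI allI impI)
      show "3 \<le> length (map g cs)" "set (map g cs) \<subseteq> Vs1" using cs gin by auto
      show "distinct (map g cs)"
        using cs \<open>inj_on g Vs2\<close> by (simp add: distinct_map inj_on_subset)
      fix i assume i: "i < length (map g cs)"
      then have j: "(i + 1) mod length cs < length cs" by (intro mod_less_divisor) auto
      then have "cs ! i \<in> Vs2" "cs ! ((i + 1) mod length cs) \<in> Vs2"
        using cs(3) i by (simp_all add: nth_mem subsetD)
      moreover have "E2 (cs ! i) (cs ! ((i + 1) mod length cs))" using cs(4) i by simp
      ultimately show "E1 (map g cs ! i) (map g cs ! ((i + 1) mod length (map g cs)))"
        using i j edges[OF gin gin] fg by simp
    qed
    then show False using tree unfolding is_tree_def by blast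
  qed
qed

section \<open>Replacing a vertex by a tree\<close>

locale vertex_expansion =
  old: ugraph V' E' + new: ugraph V E
  for V' :: "'v set" and E' and V and E +
  fixes p :: 'v and S :: "'v set"
  assumes p_in: "p \<in> V'"
    and S_nonempty: "S \<noteq> {}"
    and S_disjoint: "S \<inter> V' = {}"
    and new_vertices: "V = (V' - {p}) \<union> S"
    and edge_away: "\<lbrakk>a \<notin> S; b \<notin> S; a \<noteq> p; b \<noteq> p\<rbrakk> \<Longrightarrow> E a b \<longleftrightarrow> E' a b"
    and edge_from_S: "\<lbrakk>s \<in> S; E s b\<rbrakk> \<Longrightarrow> E' p b"
    and S_tree: "is_tree (S \<union> {n. E' p n}) (\<lambda>a b. E a b \<and> (a \<in> S \<or> b \<in> S))"
begin

definition nbrs :: "'v set" where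
  "nbrs = {n. E' p n}"

definition tree_edge :: "'v \<Rightarrow> 'v \<Rightarrow> bool" where
  "tree_edge a b \<longleftrightarrow> E a b \<and> (a \<in> S \<or> b \<in> S)"

definition collapse :: "'v \<Rightarrow> 'v" where
  "collapse a = (if a \<in> S then p else a)"

lemma p_notin_V: "p \<notin> V"
  using new_vertices S_disjoint p_in by auto

lemma nbrs_in: "n \<in> nbrs \<Longrightarrow> n \<in> V' \<and> n \<noteq> p \<and> n \<notin> S"
  using old.edge_in old.irrefl S_disjoint by (auto simp: nbrs_def)

lemma S_edge_nbrs: "s \<in> S \<Longrightarrow> E s b \<Longrightarrow> b \<in> nbrs"
  using edge_from_S by (auto simp: nbrs_def)

sublocale tree: ugraph "S \<union> nbrs" tree_edge
proof
  show "tree_edge a b \<Longrightarrow> tree_edge b a" for a b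
    using new.sym by (auto simp: tree_edge_def)
  show "\<not> tree_edge a a" for a
    using new.irrefl by (simp add: tree_edge_def)
  show "tree_edge a b \<Longrightarrow> a \<in> S \<union> nbrs \<and> b \<in> S \<union> nbrs" for a b
    using S_edge_nbrs new.sym by (auto simp: tree_edge_def)
qed

lemma tree_connected: "a \<in> S \<union> nbrs \<Longrightarrow> b \<in> S \<union> nbrs \<Longrightarrow> tree_edge\<^sup>*\<^sup>* a b"
  using S_tree tree.graph_connected_iff
  unfolding is_tree_def nbrs_def tree_edge_def[abs_def] by blast

lemma tree_acyclic: "tree_edge x y \<Longrightarrow> \<not> (del_edge tree_edge x y)\<^sup>*\<^sup>* y x"
  using S_tree tree.graph_has_cycle_iff
  unfolding is_tree_def nbrs_def tree_edge_def[abs_def] by blast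

lemma collapse_edge:
  assumes "E a b"
  shows "E' (collapse a) (collapse b)"
proof -
  consider "a \<in> S" | "b \<in> S" | "a \<notin> S" "b \<notin> S" by blast
  then show ?thesis
  proof cases
    case 1
    then have "b \<in> nbrs" using S_edge_nbrs assms by blast
    then show ?thesis using 1 nbrs_in by (simp add: collapse_def nbrs_def)
  next
    case 2
    then have "a \<in> nbrs" using S_edge_nbrs new.sym assms by blast
    then show ?thesis using 2 nbrs_in old.sym by (simp add: collapse_def nbrs_def)
  next
    case 3
    moreover have "a \<noteq> p" "b \<noteq> p" using new.edge_in[OF assms] p_notin_V by auto
    ultimately show ?thesis using edge_away assms by (simp add: collapse_def)
  qed
qed

lemma collapse_in: "a \<in> V \<Longrightarrow> collapse a \<in> V'"
  using new_vertices p_in by (auto simp: collapse_def)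

lemma collapse_surj: "a' \<in> V' \<Longrightarrow> \<exists>a\<in>V. collapse a = a'"
proof (cases "a' = p")
  case True
  obtain s where "s \<in> S" using S_nonempty by blast
  then show ?thesis using True new_vertices by (auto simp: collapse_def)
next
  case False
  assume "a' \<in> V'"
  then show ?thesis using False new_vertices S_disjoint by (intro bexI[of _ a']) (auto simp: collapse_def)
qed

text \<open>A walk of the old graph lifts to the new one: each visit of \<open>p\<close> is replaced by a
  walk in the tree.\<close>

lemma lift_walk:
  assumes walk: "R'\<^sup>*\<^sup>* (collapse a) (collapse b)" and a: "a \<in> V" and b: "b \<in> V"
    and R'_old: "\<And>a b. R' a b \<Longrightarrow> E' a b"
    and tree_R: "\<And>a b. tree_edge a b \<Longrightarrow> R a b"
    and away_R: "\<And>a b. \<lbrakk>a \<notin> S; b \<notin> S; a \<noteq> p; b \<noteq> p; R' a b\<rbrakk> \<Longrightarrow> R a b"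
  shows "R\<^sup>*\<^sup>* a b"
proof -
  have tree_walk: "R\<^sup>*\<^sup>* a b" if "a \<in> S \<union> nbrs" "b \<in> S \<union> nbrs" for a b
    using tree_connected[OF that] by (rule mono_rtranclp[rule_format, OF tree_R, rotated])
  have "R\<^sup>*\<^sup>* a b" if "R'\<^sup>*\<^sup>* (collapse a) b'" "b \<in> V" "collapse b = b'" for b b'
    using that
  proof (induction arbitrary: b rule: rtranclp_induct)
    case base
    then show ?case
      using a p_notin_V tree_walk[of a b] by (cases "a \<in> S") (auto simp: collapse_def split: if_splits)
  next
    case (step b' c' c)
    have "E' b' c'" using R'_old[OF step(2)] .
    obtain b0 where b0: "b0 \<in> V" "collapse b0 = b'"
      using collapse_surj old.edge_in[OF \<open>E' b' c'\<close>] by blast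
    have "R\<^sup>*\<^sup>* b0 c"
    proof (cases "b0 \<in> S \<or> c \<in> S")
      case True
      then have "b0 \<in> S \<union> nbrs" "c \<in> S \<union> nbrs"
        using b0 step(5) \<open>E' b' c'\<close> old.irrefl old.sym by (auto simp: collapse_def nbrs_def split: if_splits)
      then show ?thesis by (rule tree_walk)
    next
      case False
      then have "b0 \<noteq> p" "c \<noteq> p" using b0(1) step(4) p_notin_V by auto
      then show ?thesis
        using away_R[of b0 c] False step(2,5) b0(2) by (simp add: collapse_def)
    qed
    then show ?case using step(3)[OF b0] by simp
  qed
  then show ?thesis using walk b by blast
qed

lemma graph_connected_iff_old: "graph_connected V E \<longleftrightarrow> graph_connected V' E'"
proof
  assume "graph_connected V E"
  then show "graph_connected V' E'"
    unfolding new.graph_connected_iff old.graph_connected_iff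
    using collapse_surj rtranclp_map[of E E' collapse, OF collapse_edge] by metis
next
  assume "graph_connected V' E'"
  then show "graph_connected V E"
    unfolding new.graph_connected_iff old.graph_connected_iff
    using lift_walk[where R' = E' and R = E] collapse_in edge_away
    by (metis tree_edge_def)
qed


lemma old_cycle_of_new_cycle_away:
  assumes xy: "E x y" "(del_edge E x y)\<^sup>*\<^sup>* y x" and away: "x \<notin> S" "y \<notin> S"
  shows "graph_has_cycle V' E'"
proof -
  have "x \<noteq> p" "y \<noteq> p" using new.edge_in[OF xy(1)] p_notin_V by auto
  then have "E' x y" and collapse_xy: "collapse x = x" "collapse y = y"
    using edge_away away xy(1) by (auto simp: collapse_def)
  have "del_edge E' x y (collapse a) (collapse b)" if "del_edge E x y a b" for a b
  proof -
    have "collapse a = x \<Longrightarrow> a = x" "collapse a = y \<Longrightarrow> a = y"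
      "collapse b = x \<Longrightarrow> b = x" "collapse b = y \<Longrightarrow> b = y"
      using \<open>x \<noteq> p\<close> \<open>y \<noteq> p\<close> by (auto simp: collapse_def split: if_splits)
    then show ?thesis using that collapse_edge by (auto simp: del_edge_def)
  qed
  then have "(del_edge E' x y)\<^sup>*\<^sup>* y x"
    using rtranclp_map[OF _ xy(2)] collapse_xy by metis
  then show ?thesis using old.graph_has_cycle_iff \<open>E' x y\<close> by blast
qed

text \<open>Let \<open>C\<close> be the component of \<open>s \<in> S\<close> in the tree once its edge to \<open>n\<close> is deleted.
  A walk from \<open>s\<close> that avoids this edge stays in \<open>C\<close> until it leaves \<open>C\<close> through an old
  neighbour of \<open>p\<close>; from then on it runs outside \<open>S\<close> until it reaches a neighbour outside \<open>C\<close>.\<close>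

lemma walk_leaving_tree_component:
  assumes walk: "(del_edge E s n)\<^sup>*\<^sup>* s y" and "s \<in> S"
  defines "C \<equiv> {v. (del_edge tree_edge s n)\<^sup>*\<^sup>* s v}"
    and "away \<equiv> \<lambda>u v. E u v \<and> u \<notin> S \<and> v \<notin> S"
  shows "y \<in> C
    \<or> (\<exists>m1 m2. m1 \<in> C \<inter> nbrs \<and> m2 \<in> nbrs - C \<and> away\<^sup>*\<^sup>* m1 m2)
    \<or> (\<exists>m1. m1 \<in> C \<inter> nbrs \<and> away\<^sup>*\<^sup>* m1 y \<and> y \<notin> S)"
  using walk
proof (induction rule: rtranclp_induct)
  case base
  then show ?case by (simp add: C_def)
next
  case (step y y')
  have e: "E y y'" and not_sn: "\<not> (y = s \<and> y' = n)" "\<not> (y = n \<and> y' = s)"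
    using step(2) by (auto simp: del_edge_def)
  have C_sub: "v \<in> S \<union> nbrs" if "v \<in> C" for v
  proof -
    have "(del_edge tree_edge s n)\<^sup>*\<^sup>* s v" using that by (simp add: C_def)
    then show ?thesis
      using \<open>s \<in> S\<close> by (induction rule: rtranclp_induct) (auto simp: del_edge_def dest: tree.edge_in)
  qed
  have C_step: "y' \<in> C" if "y \<in> C" "y \<in> S \<or> y' \<in> S"
    using that e not_sn
    by (auto simp: C_def del_edge_def tree_edge_def intro: rtranclp.rtrancl_into_rtrancl)
  from step(3) show ?case
  proof (elim disjE exE conjE)
    assume "y \<in> C"
    show ?case
    proof (cases "y \<in> S \<or> y' \<in> S")
      case True
      then show ?thesis using C_step \<open>y \<in> C\<close> by blast
    next
      case False
      then have "away\<^sup>*\<^sup>* y y'" using e by (auto simp: away_def)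
      then show ?thesis using C_sub \<open>y \<in> C\<close> False by blast
    qed
  next
    fix m1 assume m1: "m1 \<in> C \<inter> nbrs" "away\<^sup>*\<^sup>* m1 y" "y \<notin> S"
    show ?case
    proof (cases "y' \<in> S")
      case True
      then have "y \<in> nbrs" using S_edge_nbrs new.sym e by blast
      then show ?thesis using m1 C_step True by blast
    next
      case False
      then have "away\<^sup>*\<^sup>* m1 y'"
        using m1 e by (auto simp: away_def intro: rtranclp.rtrancl_into_rtrancl)
      then show ?thesis using m1 False by blast
    qed
  qed blast
qed

lemma old_cycle_of_new_cycle_at_S:
  assumes "s \<in> S" "E s n" "(del_edge E s n)\<^sup>*\<^sup>* n s"
  shows "graph_has_cycle V' E'"
proof -
  define C where "C = {v. (del_edge tree_edge s n)\<^sup>*\<^sup>* s v}"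
  define away where "away = (\<lambda>u v. E u v \<and> u \<notin> S \<and> v \<notin> S)"
  have "n \<in> nbrs" using S_edge_nbrs assms(1,2) .
  have "tree_edge s n" using assms(1,2) by (simp add: tree_edge_def)
  then have "n \<notin> C"
    using tree_acyclic tree.del_edge_rtranclp_sym unfolding C_def by blast
  moreover have "(del_edge E s n)\<^sup>*\<^sup>* s n" using new.del_edge_rtranclp_sym assms(3) .
  ultimately obtain m1 m2 where m: "m1 \<in> C \<inter> nbrs" "m2 \<in> nbrs - C" "away\<^sup>*\<^sup>* m1 m2"
    using walk_leaving_tree_component[OF _ assms(1)] \<open>n \<in> nbrs\<close>
    unfolding C_def away_def by blast
  have "del_edge E' p m1 a b" if "away a b" for a b
  proof -
    have "E a b" "a \<notin> S" "b \<notin> S" using that by (auto simp: away_def)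
    moreover have "a \<noteq> p" "b \<noteq> p" using new.edge_in[OF \<open>E a b\<close>] p_notin_V by auto
    ultimately show ?thesis using edge_away by (auto simp: del_edge_def)
  qed
  then have "(del_edge E' p m1)\<^sup>*\<^sup>* m1 m2"
    using mono_rtranclp[rule_format, of away "del_edge E' p m1"] m(3) by blast
  moreover have "del_edge E' p m1 m2 p"
    using m old.sym nbrs_in by (auto simp: del_edge_def nbrs_def)
  ultimately have "(del_edge E' p m1)\<^sup>*\<^sup>* m1 p" by (rule rtranclp.rtrancl_into_rtrancl)
  moreover have "E' p m1" using m(1) by (simp add: nbrs_def)
  ultimately show ?thesis using old.graph_has_cycle_iff by blast
qed

lemma new_cycle_of_old_cycle_away:
  assumes xy: "E' x y" "(del_edge E' x y)\<^sup>*\<^sup>* y x" and away: "x \<noteq> p" "y \<noteq> p"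
  shows "graph_has_cycle V E"
proof -
  have "x \<notin> S" "y \<notin> S" "x \<in> V" "y \<in> V"
    using old.edge_in[OF xy(1)] away S_disjoint new_vertices by auto
  then have "E x y" and collapse_xy: "collapse x = x" "collapse y = y"
    using edge_away away xy(1) by (auto simp: collapse_def)
  moreover have "(del_edge E x y)\<^sup>*\<^sup>* y x"
  proof (rule lift_walk)
    show "(del_edge E' x y)\<^sup>*\<^sup>* (collapse y) (collapse x)" using xy(2) collapse_xy by simp
    show "tree_edge a b \<Longrightarrow> del_edge E x y a b" for a b
      using \<open>x \<notin> S\<close> \<open>y \<notin> S\<close> by (auto simp: del_edge_def tree_edge_def)
    show "\<lbrakk>a \<notin> S; b \<notin> S; a \<noteq> p; b \<noteq> p; del_edge E' x y a b\<rbrakk> \<Longrightarrow> del_edge E x y a b" for a b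
      using edge_away by (auto simp: del_edge_def)
  qed (use \<open>x \<in> V\<close> \<open>y \<in> V\<close> in \<open>auto simp: del_edge_def\<close>)
  ultimately show ?thesis using new.graph_has_cycle_iff by blast
qed

text \<open>The old cycle through \<open>p\<close> returns to \<open>p\<close> from a second neighbour \<open>m\<close>; in the
  new graph it is closed by the tree path from \<open>n\<close> to \<open>m\<close>.\<close>

lemma new_cycle_of_old_cycle_at_p:
  assumes "E' p n" "(del_edge E' p n)\<^sup>*\<^sup>* n p"
  shows "graph_has_cycle V E"
proof -
  let ?avoid_p = "\<lambda>u v. del_edge E' p n u v \<and> u \<noteq> p \<and> v \<noteq> p"
  have "n \<noteq> p" using assms(1) old.irrefl by blast
  then obtain m where m: "?avoid_p\<^sup>*\<^sup>* n m" "del_edge E' p n m p"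
    using rtranclp_avoid_or_hit[OF assms(2)] by blast
  have "m \<in> nbrs" "n \<in> nbrs" "m \<noteq> n"
    using m(2) assms(1) old.sym by (auto simp: del_edge_def nbrs_def)
  then obtain z where z: "tree_edge m z" "(del_edge tree_edge m z)\<^sup>*\<^sup>* z n"
    using rtranclp_first_edge[OF tree_connected] by blast
  have "z \<in> S" using z(1) nbrs_in[OF \<open>m \<in> nbrs\<close>] by (simp add: tree_edge_def)
  have "(del_edge E m z)\<^sup>*\<^sup>* z n"
    using mono_rtranclp[rule_format, of "del_edge tree_edge m z" "del_edge E m z"] z(2)
    by (auto simp: del_edge_def tree_edge_def)
  moreover have "del_edge E m z a b" if "?avoid_p a b" for a b
  proof -
    have "E' a b" "a \<noteq> p" "b \<noteq> p" using that by (auto simp: del_edge_def)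
    moreover then have "a \<notin> S" "b \<notin> S" using old.edge_in S_disjoint by auto
    ultimately show ?thesis using edge_away \<open>z \<in> S\<close> by (auto simp: del_edge_def)
  qed
  then have "(del_edge E m z)\<^sup>*\<^sup>* n m"
    using mono_rtranclp[rule_format, of ?avoid_p "del_edge E m z"] m(1) by blast
  ultimately have "(del_edge E m z)\<^sup>*\<^sup>* z m" by (rule rtranclp_trans)
  moreover have "E m z" using z(1) by (simp add: tree_edge_def)
  ultimately show ?thesis using new.graph_has_cycle_iff by blast
qed

lemma graph_has_cycle_iff_old: "graph_has_cycle V E \<longleftrightarrow> graph_has_cycle V' E'"
proof
  assume "graph_has_cycle V E"
  then obtain x y where xy: "E x y" "(del_edge E x y)\<^sup>*\<^sup>* y x"
    using new.graph_has_cycle_iff by blast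
  then show "graph_has_cycle V' E'"
    using old_cycle_of_new_cycle_away old_cycle_of_new_cycle_at_S new.cycle_edge_sym by blast
next
  assume "graph_has_cycle V' E'"
  then obtain x y where xy: "E' x y" "(del_edge E' x y)\<^sup>*\<^sup>* y x"
    using old.graph_has_cycle_iff by blast
  then show "graph_has_cycle V E"
    using new_cycle_of_old_cycle_away new_cycle_of_old_cycle_at_p old.cycle_edge_sym by blast
qed

lemma is_tree_iff_old: "is_tree V E \<longleftrightarrow> is_tree V' E'"
  using graph_connected_iff_old graph_has_cycle_iff_old S_nonempty new_vertices p_in
  unfolding is_tree_def by blast

end

section \<open>Extension graphs\<close>

lemma lang_appendD1: "u @ v \<in> lang X \<Longrightarrow> u \<in> lang X"
proof -
  assume "u @ v \<in> lang X"
  then obtain x i where "x \<in> X" "\<forall>j < length (u @ v). (u @ v) ! j = x (i + int j)"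
    by (auto simp: lang_def)
  then show ?thesis
    unfolding lang_def
    by (intro CollectI bexI[of _ x] exI[of _ i] allI impI) (metis length_append nth_append trans_less_add1)
qed

lemma lang_appendD2: "u @ v \<in> lang X \<Longrightarrow> v \<in> lang X"
proof -
  assume "u @ v \<in> lang X"
  then obtain x i where x: "x \<in> X" "\<forall>j < length (u @ v). (u @ v) ! j = x (i + int j)"
    by (auto simp: lang_def)
  have "\<forall>j < length v. v ! j = x (i + int (length u) + int j)"
  proof (intro allI impI)
    fix j assume "j < length v"
    then show "v ! j = x (i + int (length u) + int j)"
      using x(2)[rule_format, of "length u + j"] by (simp add: nth_append add.assoc)
  qed
  then show ?thesis using x(1) unfolding lang_def by blast
qed

text \<open>Points of \<open>X\<close> are bi-infinite sequences, so every factor extends to the left.\<close>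

lemma lang_extend_left: "w \<in> lang X \<Longrightarrow> \<exists>c. c # w \<in> lang X"
proof -
  assume "w \<in> lang X"
  then obtain x i where x: "x \<in> X" "\<forall>j < length w. w ! j = x (i + int j)"
    by (auto simp: lang_def)
  have "\<forall>j < length (x (i - 1) # w). (x (i - 1) # w) ! j = x (i - 1 + int j)"
    using x(2) by (auto simp: nth_Cons split: nat.split)
  then show ?thesis using x(1) unfolding lang_def by blast
qed

declare ext_edge.simps(1,2) [simp del]

lemma ext_edge_Inl_Inr [simp]:
  "ext_edge X U V w (Inl u) (Inr v) \<longleftrightarrow> u \<in> U \<and> v \<in> V \<and> u @ w @ v \<in> lang X"
  using lang_appendD1[of "u @ w" v X] lang_appendD2[of u "w @ v" X]
  by (auto simp: ext_edge.simps L_set_def R_set_def)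

lemma ext_edge_Inr_Inl [simp]:
  "ext_edge X U V w (Inr v) (Inl u) \<longleftrightarrow> u \<in> U \<and> v \<in> V \<and> u @ w @ v \<in> lang X"
  using ext_edge_Inl_Inr[of X U V w u v] by (simp only: ext_edge.simps)

lemma ugraph_ext_graph: "ugraph (ext_vertices X U V w) (ext_edge X U V w)"
proof
  show "ext_edge X U V w a b \<Longrightarrow> ext_edge X U V w b a" for a b
    by (cases a; cases b) auto
  show "\<not> ext_edge X U V w a a" for a
    by (cases a) auto
  have factors: "u @ w \<in> lang X \<and> w @ v \<in> lang X" if "u @ w @ v \<in> lang X" for u v
    using that lang_appendD1[of "u @ w" v X] lang_appendD2[of u "w @ v" X] by simp
  show "ext_edge X U V w a b \<Longrightarrow> a \<in> ext_vertices X U V w \<and> b \<in> ext_vertices X U V w" for a b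
    by (cases a; cases b) (auto simp: ext_vertices_def L_set_def R_set_def dest: factors)
qed

text \<open>The left vertices \<open>a l\<close> of \<open>\<E>\<^sub>U\<^sub>,\<^sub>V(w)\<close> together with their neighbours form a copy of
  \<open>\<E>\<^sub>A\<^sub>,\<^sub>V(l w)\<close>, via \<open>a \<mapsto> a l\<close>.\<close>

lemma ext_graph_expanded_tree:
  assumes U_ext: "\<And>c. c # l \<in> lang X \<Longrightarrow> c # l \<in> U"
    and tree: "ext_graph_is_tree X letters V (l @ w)"
  defines "S \<equiv> Inl ` {c # l | c. c # l @ w \<in> lang X}"
  shows "is_tree (S \<union> Inr ` R_set X V (l @ w))
      (\<lambda>a b. ext_edge X U V w a b \<and> (a \<in> S \<or> b \<in> S))"
proof (rule is_tree_bij_betw[OF tree[unfolded ext_graph_is_tree_def]])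
  let ?f = "map_sum (\<lambda>u. u @ l) id"
  have vertices: "ext_vertices X letters V (l @ w)
      = Inl ` {[c] | c. c # l @ w \<in> lang X} \<union> Inr ` R_set X V (l @ w)"
    by (auto simp: ext_vertices_def L_set_def letters_def)
  have appended: "(\<lambda>u. u @ l) ` {[c] | c. c # l @ w \<in> lang X} = {c # l | c. c # l @ w \<in> lang X}"
    by auto
  have "?f ` ext_vertices X letters V (l @ w) = S \<union> Inr ` R_set X V (l @ w)"
    unfolding vertices S_def by (simp add: image_Un image_image flip: appended)
  moreover have "inj ?f"
    by (auto simp: inj_on_def map_sum_def split: sum.splits)
  ultimately show "bij_betw ?f (ext_vertices X letters V (l @ w)) (S \<union> Inr ` R_set X V (l @ w))"
    by (metis bij_betw_imageI inj_on_subset subset_UNIV)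
  have U_ext': "c # l @ w @ v \<in> lang X \<Longrightarrow> c # l \<in> U" for c v
    using U_ext lang_appendD1[of "c # l" "w @ v" X] by simp
  fix a b assume "a \<in> ext_vertices X letters V (l @ w)" "b \<in> ext_vertices X letters V (l @ w)"
  then show "(ext_edge X U V w (?f a) (?f b) \<and> (?f a \<in> S \<or> ?f b \<in> S))
      \<longleftrightarrow> ext_edge X letters V (l @ w) a b"
    unfolding vertices S_def
    by (cases a; cases b) (auto simp: letters_def U_ext')
qed

lemma vertex_expansion_ext_graph:
  assumes U_suffix: "suffix_code U" and lw: "l @ w \<in> lang X"
    and U_ext: "\<And>c. c # l \<in> lang X \<Longrightarrow> c # l \<in> U"
    and tree: "ext_graph_is_tree X letters V (l @ w)"
  defines "U' \<equiv> U - range (\<lambda>c. c # l) \<union> {l}"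
  shows "vertex_expansion (ext_vertices X U' V w) (ext_edge X U' V w)
    (ext_vertices X U V w) (ext_edge X U V w) (Inl l) (Inl ` {c # l | c. c # l @ w \<in> lang X})"
proof -
  obtain c0 where "c0 # l @ w \<in> lang X" using lang_extend_left[OF lw] by blast
  then have "c0 # l \<in> U" using U_ext lang_appendD1[of "c0 # l" w X] by simp
  then have "l \<notin> U"
    using U_suffix suffix_ConsI[of l l c0] unfolding suffix_code_def by fastforce
  have U_ext': "c # l @ w \<in> lang X \<Longrightarrow> c # l \<in> U" for c
    using U_ext lang_appendD1[of "c # l" w X] by simp
  have S_pref: "c # l @ w \<in> lang X" if "c # l @ w @ v \<in> lang X" for c v
    using that lang_appendD1[of "c # l @ w" v X] by simp
  have l_ext: "l @ w @ v \<in> lang X" if "c # l @ w @ v \<in> lang X" for c v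
    using that lang_appendD2[of "[c]" "l @ w @ v" X] by simp
  show ?thesis
  proof (intro vertex_expansion.intro ugraph_ext_graph vertex_expansion_axioms.intro)
    show "Inl l \<in> ext_vertices X U' V w"
      using lw by (simp add: ext_vertices_def L_set_def U'_def)
    show "Inl ` {c # l | c. c # l @ w \<in> lang X} \<noteq> {}"
      using \<open>c0 # l @ w \<in> lang X\<close> by blast
    show "Inl ` {c # l | c. c # l @ w \<in> lang X} \<inter> ext_vertices X U' V w = {}"
      by (auto simp: ext_vertices_def L_set_def U'_def)
    show "ext_vertices X U V w = (ext_vertices X U' V w - {Inl l})
        \<union> Inl ` {c # l | c. c # l @ w \<in> lang X}"
      using \<open>l \<notin> U\<close> U_ext' by (auto simp: ext_vertices_def L_set_def U'_def)
    show "ext_edge X U V w a b \<longleftrightarrow> ext_edge X U' V w a b"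
      if "a \<notin> Inl ` {c # l | c. c # l @ w \<in> lang X}" "b \<notin> Inl ` {c # l | c. c # l @ w \<in> lang X}"
        "a \<noteq> Inl l" "b \<noteq> Inl l" for a b
      using that S_pref by (cases a; cases b) (auto simp: U'_def)
    show "ext_edge X U' V w (Inl l) b"
      if "s \<in> Inl ` {c # l | c. c # l @ w \<in> lang X}" "ext_edge X U V w s b" for s b
      using that l_ext by (cases b) (auto simp: U'_def)
    show "is_tree (Inl ` {c # l | c. c # l @ w \<in> lang X} \<union> {n. ext_edge X U' V w (Inl l) n})
        (\<lambda>a b. ext_edge X U V w a b \<and> (a \<in> Inl ` {c # l | c. c # l @ w \<in> lang X}
          \<or> b \<in> Inl ` {c # l | c. c # l @ w \<in> lang X}))"
    proof -
      have "ext_edge X U' V w (Inl l) n \<longleftrightarrow> n \<in> Inr ` R_set X V (l @ w)" for n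
        by (cases n) (auto simp: U'_def R_set_def)
      then have "{n. ext_edge X U' V w (Inl l) n} = Inr ` R_set X V (l @ w)" by blast
      then show ?thesis using ext_graph_expanded_tree[OF U_ext tree] by simp
    qed
  qed
qed

theorem mainTheorem14:
  fixes X :: "(int \<Rightarrow> 'a::finite) set"
    and U V :: "'a list set" and w l :: "'a list"
  assumes "shift_space X"
    and "w \<in> lang X"
    and "finite U" and "X_max_suffix_code X U"
    and "finite V" and "X_max_prefix_code X V"
    and "l \<in> lang X" and "l @ w \<in> lang X"
    and "{a @ l | a. a \<in> letters} \<inter> lang X \<subseteq> U"
    and "ext_graph_is_tree X letters V (l @ w)"
  shows "ext_graph_is_tree X ((U - {a @ l | a. a \<in> letters}) \<union> {l}) V w
         \<longleftrightarrow> ext_graph_is_tree X U V w"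
proof -
  have A_l: "{a @ l | a. a \<in> letters} = range (\<lambda>c. c # l)"
    by (auto simp: letters_def)
  have U_ext: "c # l \<in> U" if "c # l \<in> lang X" for c
    using assms(9) that unfolding A_l by blast
  have "suffix_code U"
    using assms(4) by (simp add: X_max_suffix_code_def)
  from vertex_expansion_ext_graph[OF this assms(8) U_ext assms(10)]
  show ?thesis
    unfolding A_l ext_graph_is_tree_def by (blast dest: vertex_expansion.is_tree_iff_old)
qed

end
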